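(* Consider a one-hidden-layer discrete-time LIF-SNN with direct encoding, latency $T$, input dimension $n_{\mathrm{in}}$ and $n_1$ hidden neurons, with arbitrary fixed temporal parameters $u(0)\in\mathbb{R}^{n_1}$, $\beta\in[0,1]$, $\vartheta>0$. For $k\in[n_1]$ let $\mathcal{A}_k$ be the family of parallel hyperplanes corresponding to the $k$-th hidden neuron. Then one can construct a weight matrix $W\in\mathbb{R}^{n_1\times n_{\mathrm{in}}}$ and a bias vector $b\in\mathbb{R}^{n_1}$ such that the families $\mathcal{A}_1,\dots,\mathcal{A}_{n_1}$ are in general position.
   Context: The hidden layer evolves, for input $x\in\mathbb{R}^{n_{\mathrm{in}}}$ and $t\in[T]$, as $s(t)=H(\beta u(t-1)+Wx+b-\vartheta\mathbf{1})$, $u(t)=\beta u(t-1)+Wx+b-\vartheta s(t)$, with $H$ the entrywise Heaviside function. This yields $s_k(t)=H\big(\langle w_k,x\rangle+b_k-g_{t-1}(s_k(1),\dots,s_k(t-1))\big)$, where $w_k$ is the $k$-th row of $W$ and $g_{t-1}(a_1,\dots,a_{t-1})=\frac{-\beta^t u_k(0)+\vartheta(1+\sum_{i=1}^{t-1}\beta^i a_{t-i})}{\sum_{i=0}^{t-1}\beta^i}$ for $(a_1,\dots,a_{t-1})\in\{0,1\}^{t-1}$. The family $\mathcal{A}_k$ consists of the hyperplanes $\{x:\langle w_k,x\rangle+b_k-g_{t-1}(a)=0\}$ for $t\in[T]$ and $a\in\{0,1\}^{t-1}$. A finite set of hyperplanes in $\mathbb{R}^d$ is in general position if the intersection of any $p$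 distinct elements is empty when $p>d$ and a $(d-p)$-dimensional affine subspace when $p\le d$; families $\mathcal{A}_1,\dots,\mathcal{A}_{n_1}$ of parallel hyperplanes are in general position if every choice of one hyperplane from each family forms a set in general position. *)

theory Defs
  imports "HOL-Analysis.Analysis"
begin

definition lif_g :: "real \<Rightarrow> real \<Rightarrow> real \<Rightarrow> nat \<Rightarrow> (nat \<Rightarrow> real) \<Rightarrow> real" where
  "lif_g u0k \<beta> \<theta> t a =
     (- (\<beta> ^ t) * u0k + \<theta> * (1 + (\<Sum>i=1..t-1. \<beta> ^ i * a (t - i))))
     / (\<Sum>i=0..t-1. \<beta> ^ i)"

definition lif_family ::
  "real ^ 'n ^ 'm \<Rightarrow> real ^ 'm \<Rightarrow> real ^ 'm \<Rightarrow> real \<Rightarrow> real \<Rightarrow> nat \<Rightarrow> 'm \<Rightarrow> (real ^ 'n) set set" where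
  "lif_family W b u0 \<beta> \<theta> T k =
     {{x. inner (W $ k) x + b $ k - lif_g (u0 $ k) \<beta> \<theta> t a = 0} | t a.
        t \<in> {1..T} \<and> a \<in> {1..t-1} \<rightarrow> {0, 1}}"

definition hyperplanes_gen_pos :: "('a::euclidean_space) set set \<Rightarrow> bool" where
  "hyperplanes_gen_pos H \<longleftrightarrow>
     (\<forall>S \<subseteq> H. S \<noteq> {} \<longrightarrow>
        (if card S > DIM('a) then \<Inter>S = {}
         else affine (\<Inter>S) \<and> aff_dim (\<Inter>S) = int DIM('a) - int (card S)))"

definition families_gen_pos :: "('k \<Rightarrow> ('a::euclidean_space) set set) \<Rightarrow> 'k set \<Rightarrow> bool" where
  "families_gen_pos A K \<longleftrightarrow>
     (\<forall>h. (\<forall>k\<in>K. h k \<in> A k) \<longrightarrow> hyperplanes_gen_pos (h ` K))"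

end

theory Submission
  imports Defs
begin

text \<open>Each family \<open>\<A>\<^sub>k\<close> consists of the hyperplanes \<open>w\<^sub>k \<bullet> x + b\<^sub>k = g\<close>, where \<open>g\<close> ranges over a
  finite set of thresholds. Rows and biases are chosen neuron by neuron. The new row avoids the
  spans of all sets of fewer than \<open>n\<^sub>i\<^sub>n\<close> earlier rows, a finite union of null sets; then any
  \<open>p \<le> n\<^sub>i\<^sub>n\<close> rows are independent and the corresponding hyperplanes meet in an affine subspace of
  dimension \<open>n\<^sub>i\<^sub>n - p\<close>. In particular \<open>n\<^sub>i\<^sub>n\<close> earlier hyperplanes meet in a single point, and
  there are finitely many such vertices; the new bias avoids the finitely many values that would
  put a vertex on a new hyperplane, so no \<open>n\<^sub>i\<^sub>n + 1\<close> hyperplanes have a common point.\<close>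

lemma affine_linear_equations:
  fixes w :: "'k \<Rightarrow> 'a::euclidean_space"
  shows "affine {x. \<forall>j\<in>J. w j \<bullet> x = c j}"
proof -
  have "{x. \<forall>j\<in>J. w j \<bullet> x = c j} = \<Inter>((\<lambda>j. {x. w j \<bullet> x = c j}) ` J)"
    by auto
  then show ?thesis
    by (auto simp: affine_hyperplane)
qed

lemma aff_dim_independent_linear_equations:
  fixes w :: "'k \<Rightarrow> 'a::euclidean_space"
  assumes "independent (w ` J)" and "inj_on w J"
  shows "aff_dim {x. \<forall>j\<in>J. w j \<bullet> x = c j} = int DIM('a) - int (card J)"
proof -
  have "finite J"
    using assms independent_imp_finite finite_imageD by blast
  then show ?thesis
    using assms
  proof (induction J rule: finite_induct)
    case empty
    then show ?case by simp
  next
    case (insert k J)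
    define X where "X = {x. \<forall>j\<in>J. w j \<bullet> x = c j}"
    have indep: "independent (w ` J)"
      using insert.prems by (meson image_mono independent_mono subset_insertI)
    have inj: "inj_on w J"
      using insert.prems by auto
    have dim_X: "aff_dim X = int DIM('a) - int (card J)"
      using insert.IH[OF indep inj] by (simp add: X_def)
    have "card J \<le> DIM('a)"
      using independent_bound[OF indep] card_image[OF inj] by simp
    with dim_X have "X \<noteq> {}"
      by auto
    then obtain x0 where x0: "x0 \<in> X"
      by blast
    have "w k \<notin> span (w ` J)"
      using insert.prems insert.hyps by (simp add: independent_insert)
    txt \<open>Split \<open>w k\<close> into a part in the span of the other rows and an orthogonal part \<open>z\<close>:
      translation along \<open>z\<close> preserves \<open>X\<close> but changes \<open>w k \<bullet> x\<close>, so the new hyperplane cuts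
      \<open>X\<close> without containing it.\<close>
    moreover obtain y z where y: "y \<in> span (w ` J)"
      and z: "\<And>v. v \<in> span (w ` J) \<Longrightarrow> orthogonal z v" and wk: "w k = y + z"
      using orthogonal_subspace_decomp_exists[of "w ` J" "w k"] by metis
    ultimately have "z \<noteq> 0"
      by auto
    have "w k \<bullet> z = z \<bullet> z"
      using z[OF y] wk by (simp add: orthogonal_def inner_add_left inner_add_right inner_commute)
    with \<open>z \<noteq> 0\<close> have wk_z: "w k \<bullet> z \<noteq> 0"
      by simp
    have z_orth: "w j \<bullet> z = 0" if "j \<in> J" for j
      using z[of "w j"] that by (simp add: span_base orthogonal_def inner_commute)
    have X_shift: "x + t *\<^sub>R z \<in> X" if "x \<in> X" for x t
      using that z_orth by (simp add: X_def inner_add_right)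
    define t where "t = (c k - w k \<bullet> x0) / (w k \<bullet> z)"
    have meets: "x0 + t *\<^sub>R z \<in> X \<inter> {x. w k \<bullet> x = c k}"
      using X_shift[OF x0] wk_z by (simp add: t_def inner_add_right)
    have "x0 + (t + 1) *\<^sub>R z \<notin> {x. w k \<bullet> x = c k}"
      using meets wk_z by (simp add: algebra_simps)
    then have not_contained: "\<not> X \<subseteq> {x. w k \<bullet> x = c k}"
      using X_shift[OF x0] by blast
    have "{x. \<forall>j\<in>insert k J. w j \<bullet> x = c j} = X \<inter> {x. w k \<bullet> x = c k}"
      by (auto simp: X_def)
    moreover have "affine X"
      by (simp add: X_def affine_linear_equations)
    ultimately show ?case
      using aff_dim_affine_Int_hyperplane[of X "w k" "c k"] meets not_contained dim_X insert.hyps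
      by auto
  qed
qed

lemma exists_not_in_span_of_small_subsets:
  fixes V :: "'a::euclidean_space set"
  assumes "finite V"
  obtains v where "\<And>S. S \<subseteq> V \<Longrightarrow> card S < DIM('a) \<Longrightarrow> v \<notin> span S"
proof -
  let ?F = "span ` {S. S \<subseteq> V \<and> card S < DIM('a)}"
  have "negligible (\<Union>?F)"
  proof (rule negligible_Union)
    show "finite ?F"
      using assms by simp
  next
    fix T assume "T \<in> ?F"
    then obtain S where S: "S \<subseteq> V" "card S < DIM('a)" and T: "T = span S"
      by blast
    have "dim T \<le> card S"
      unfolding T dim_span using S assms by (meson dim_le_card finite_subset span_superset)
    with S show "negligible T"
      by (intro negligible_lowdim) simp
  qed
  then have "\<Union>?F \<noteq> UNIV"
    by auto
  then obtain v where "v \<notin> \<Union>?F"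
    by blast
  then show thesis
    by (intro that) blast
qed

lemma independent_fun_upd_insert:
  assumes "independent (w ` J)" and "inj_on w J" and "v \<notin> span (w ` J)" and "k \<notin> J"
  shows "independent (w(k := v) ` insert k J) \<and> inj_on (w(k := v)) (insert k J)"
proof -
  have image: "w(k := v) ` J = w ` J"
    using \<open>k \<notin> J\<close> by auto
  have "v \<notin> w ` J"
    using assms(3) span_base by metis
  moreover have "inj_on (w(k := v)) J = inj_on w J"
    using \<open>k \<notin> J\<close> by (intro inj_on_cong) auto
  moreover have "independent (insert v (w ` J))"
    using assms(3,1) by (rule independent_insertI)
  ultimately show ?thesis
    using image assms(2,4) by simp
qed

definition generic_arrangement ::
  "('k \<Rightarrow> 'a::euclidean_space) \<Rightarrow> ('k \<Rightarrow> real) \<Rightarrow> ('k \<Rightarrow> real set) \<Rightarrow> 'k set \<Rightarrow> bool" where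
  "generic_arrangement w b G K \<longleftrightarrow>
     (\<forall>J\<subseteq>K. card J \<le> DIM('a) \<longrightarrow> independent (w ` J) \<and> inj_on w J) \<and>
     (\<forall>J\<subseteq>K. card J = Suc DIM('a) \<longrightarrow> {x. \<forall>j\<in>J. w j \<bullet> x + b j \<in> G j} = {})"

lemma generic_arrangementI:
  fixes w :: "'k \<Rightarrow> 'a::euclidean_space"
  assumes "\<And>J. J \<subseteq> K \<Longrightarrow> card J \<le> DIM('a) \<Longrightarrow> independent (w ` J) \<and> inj_on w J"
    and "\<And>J. J \<subseteq> K \<Longrightarrow> card J = Suc DIM('a) \<Longrightarrow> {x. \<forall>j\<in>J. w j \<bullet> x + b j \<in> G j} = {}"
  shows "generic_arrangement w b G K"
  using assms unfolding generic_arrangement_def by blast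

lemma
  fixes w :: "'k \<Rightarrow> 'a::euclidean_space"
  assumes "generic_arrangement w b G K" and "J \<subseteq> K"
  shows generic_arrangement_independent:
      "card J \<le> DIM('a) \<Longrightarrow> independent (w ` J) \<and> inj_on w J"
    and generic_arrangement_no_common_point:
      "card J = Suc DIM('a) \<Longrightarrow> {x. \<forall>j\<in>J. w j \<bullet> x + b j \<in> G j} = {}"
  using assms unfolding generic_arrangement_def by blast+

definition arrangement_vertices ::
  "('k \<Rightarrow> 'a::euclidean_space) \<Rightarrow> ('k \<Rightarrow> real) \<Rightarrow> ('k \<Rightarrow> real set) \<Rightarrow> 'k set \<Rightarrow> 'a set" where
  "arrangement_vertices w b G K =
     {x. \<exists>J\<subseteq>K. card J = DIM('a) \<and> (\<forall>j\<in>J. w j \<bullet> x + b j \<in> G j)}"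

lemma generic_arrangement_families_gen_pos:
  fixes w :: "'k \<Rightarrow> 'a::euclidean_space"
  assumes "finite K" and gen: "generic_arrangement w b G K"
  shows "families_gen_pos (\<lambda>k. (\<lambda>g. {x. w k \<bullet> x + b k = g}) ` G k) K"
  unfolding families_gen_pos_def
proof (intro allI impI)
  fix h assume "\<forall>k\<in>K. h k \<in> (\<lambda>g. {x. w k \<bullet> x + b k = g}) ` G k"
  then have "\<forall>k\<in>K. \<exists>g. g \<in> G k \<and> h k = {x. w k \<bullet> x + b k = g}"
    by blast
  then obtain g where g: "\<And>k. k \<in> K \<Longrightarrow> g k \<in> G k \<and> h k = {x. w k \<bullet> x + b k = g k}"
    by metis
  show "hyperplanes_gen_pos (h ` K)"
    unfolding hyperplanes_gen_pos_def
  proof (intro allI impI)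
    fix S assume "S \<subseteq> h ` K" "S \<noteq> {}"
    then obtain J where J: "J \<subseteq> K" "inj_on h J" and S: "S = h ` J"
      by (meson subset_image_inj)
    have card_S: "card S = card J"
      using J S card_image by blast
    have Inter_S: "\<Inter>S = {x. \<forall>j\<in>J. w j \<bullet> x = g j - b j}"
      using J S g by (auto simp: eq_diff_eq)
    show "if card S > DIM('a) then \<Inter>S = {}
          else affine (\<Inter>S) \<and> aff_dim (\<Inter>S) = int DIM('a) - int (card S)"
    proof (cases "card J > DIM('a)")
      case True
      then obtain J' where J': "J' \<subseteq> J" "card J' = Suc DIM('a)"
        by (metis Suc_leI obtain_subset_with_card_n)
      then have "{x. \<forall>j\<in>J'. w j \<bullet> x + b j \<in> G j} = {}"
        using J generic_arrangement_no_common_point[OF gen] by blast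
      moreover have "\<Inter>S \<subseteq> {x. \<forall>j\<in>J'. w j \<bullet> x + b j \<in> G j}"
        using Inter_S J' J g by (force simp: eq_diff_eq)
      ultimately have "\<Inter>S = {}"
        by blast
      then show ?thesis
        using True card_S by simp
    next
      case False
      then have "independent (w ` J)" "inj_on w J"
        using J generic_arrangement_independent[OF gen] by auto
      then show ?thesis
        using False card_S Inter_S affine_linear_equations
          aff_dim_independent_linear_equations[of w J "\<lambda>j. g j - b j"]
        by simp
    qed
  qed
qed

lemma finite_arrangement_vertices:
  fixes w :: "'k \<Rightarrow> 'a::euclidean_space"
  assumes "finite K" and fin: "\<And>j. j \<in> K \<Longrightarrow> finite (G j)"
    and gen: "generic_arrangement w b G K"
  shows "finite (arrangement_vertices w b G K)"
proof -
  let ?Js = "{J. J \<subseteq> K \<and> card J = DIM('a)}"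
  let ?solutions = "\<lambda>J c. {x. \<forall>j\<in>J. w j \<bullet> x = c j - b j}"
  have vertices: "arrangement_vertices w b G K \<subseteq> (\<Union>J\<in>?Js. \<Union>c\<in>PiE J G. ?solutions J c)"
  proof
    fix x assume "x \<in> arrangement_vertices w b G K"
    then obtain J where J: "J \<in> ?Js" and x: "\<forall>j\<in>J. w j \<bullet> x + b j \<in> G j"
      unfolding arrangement_vertices_def by blast
    then have "restrict (\<lambda>j. w j \<bullet> x + b j) J \<in> PiE J G"
      and "x \<in> ?solutions J (restrict (\<lambda>j. w j \<bullet> x + b j) J)"
      by auto
    with J show "x \<in> (\<Union>J\<in>?Js. \<Union>c\<in>PiE J G. ?solutions J c)"
      by blast
  qed
  have "finite (?solutions J c)" if "J \<in> ?Js" for J c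
  proof -
    have "independent (w ` J)" "inj_on w J"
      using that generic_arrangement_independent[OF gen] by auto
    then have "aff_dim (?solutions J c) = 0"
      using that aff_dim_independent_linear_equations[of w J "\<lambda>j. c j - b j"] by simp
    then show ?thesis
      by (auto simp: aff_dim_eq_0)
  qed
  moreover have "finite ?Js"
    by (rule finite_subset[of ?Js "Pow K"]) (auto simp: \<open>finite K\<close>)
  moreover have "finite (PiE J G)" if "J \<in> ?Js" for J
    using that fin \<open>finite K\<close> by (intro finite_PiE) (auto intro: finite_subset)
  ultimately have "finite (\<Union>J\<in>?Js. \<Union>c\<in>PiE J G. ?solutions J c)"
    by (intro finite_UN_I) auto
  then show ?thesis
    using vertices by (rule finite_subset[rotated])
qed

lemma generic_arrangement_insert:
  fixes w :: "'k \<Rightarrow> 'a::euclidean_space"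
  assumes "finite K" and "k \<notin> K" and fin: "\<And>j. j \<in> insert k K \<Longrightarrow> finite (G j)"
    and gen: "generic_arrangement w b G K"
  obtains v c where "generic_arrangement (w(k := v)) (b(k := c)) G (insert k K)"
proof -
  obtain v where v: "\<And>S. S \<subseteq> w ` K \<Longrightarrow> card S < DIM('a) \<Longrightarrow> v \<notin> span S"
    using exists_not_in_span_of_small_subsets[OF finite_imageI[OF \<open>finite K\<close>]] by blast
  let ?P = "arrangement_vertices w b G K"
  have "finite ((\<lambda>(g, x). g - v \<bullet> x) ` (G k \<times> ?P))"
    using fin finite_arrangement_vertices[OF \<open>finite K\<close> _ gen] by simp
  then obtain c where c: "c \<notin> (\<lambda>(g, x). g - v \<bullet> x) ` (G k \<times> ?P)"
    using ex_new_if_finite[OF infinite_UNIV_char_0] by blast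
  let ?w = "w(k := v)" and ?b = "b(k := c)"
  have indep: "independent (?w ` J) \<and> inj_on ?w J"
    if J: "J \<subseteq> insert k K" "card J \<le> DIM('a)" for J
  proof (cases "k \<in> J")
    case True
    define J0 where "J0 = J - {k}"
    have J0: "J0 \<subseteq> K" "k \<notin> J0" "J = insert k J0"
      using J True by (auto simp: J0_def)
    have "finite J0"
      using J0(1) \<open>finite K\<close> by (rule finite_subset)
    with J J0 have "card J0 < DIM('a)"
      by simp
    moreover have "card (w ` J0) \<le> card J0"
      using \<open>finite J0\<close> by (rule card_image_le)
    ultimately have "v \<notin> span (w ` J0)"
      using J0(1) by (intro v) auto
    moreover have "independent (w ` J0) \<and> inj_on w J0"
      using generic_arrangement_independent[OF gen J0(1)] \<open>card J0 < DIM('a)\<close> by simp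
    ultimately show ?thesis
      using independent_fun_upd_insert[of w J0 v k] J0(2,3) by simp
  next
    case False
    with J have JK: "J \<subseteq> K"
      by auto
    with \<open>k \<notin> K\<close> have "?w ` J = w ` J" "inj_on ?w J = inj_on w J"
      by (auto intro!: inj_on_cong)
    then show ?thesis
      using generic_arrangement_independent[OF gen JK J(2)] by simp
  qed
  have no_common_point: "{x. \<forall>j\<in>J. ?w j \<bullet> x + ?b j \<in> G j} = {}"
    if J: "J \<subseteq> insert k K" "card J = Suc DIM('a)" for J
  proof (cases "k \<in> J")
    case True
    have "x \<notin> {x. \<forall>j\<in>J. ?w j \<bullet> x + ?b j \<in> G j}" for x
    proof
      assume x: "x \<in> {x. \<forall>j\<in>J. ?w j \<bullet> x + ?b j \<in> G j}"
      have "J - {k} \<subseteq> K" "card (J - {k}) = DIM('a)"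
        using J True by auto
      moreover have "\<forall>j\<in>J - {k}. w j \<bullet> x + b j \<in> G j"
      proof
        fix j assume j: "j \<in> J - {k}"
        then have "?w j \<bullet> x + ?b j \<in> G j"
          using x by blast
        with j show "w j \<bullet> x + b j \<in> G j"
          by simp
      qed
      ultimately have "x \<in> ?P"
        unfolding arrangement_vertices_def by blast
      moreover have "v \<bullet> x + c \<in> G k"
        using x True by auto
      ultimately have "c \<in> (\<lambda>(g, x). g - v \<bullet> x) ` (G k \<times> ?P)"
        by (intro image_eqI[where x = "(v \<bullet> x + c, x)"]) auto
      with c show False
        by blast
    qed
    then show ?thesis
      by blast
  next
    case False
    with J have JK: "J \<subseteq> K"
      by auto
    with \<open>k \<notin> K\<close> have
      "{x. \<forall>j\<in>J. ?w j \<bullet> x + ?b j \<in> G j} = {x. \<forall>j\<in>J. w j \<bullet> x + b j \<in> G j}"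
      by auto
    then show ?thesis
      using generic_arrangement_no_common_point[OF gen JK J(2)] by simp
  qed
  show thesis
    by (rule that[OF generic_arrangementI[OF indep no_common_point]])
qed

lemma generic_arrangement_exists:
  assumes "finite K" and "\<And>j. j \<in> K \<Longrightarrow> finite (G j)"
  shows "\<exists>(w :: 'k \<Rightarrow> 'a::euclidean_space) b. generic_arrangement w b G K"
  using assms
proof (induction K rule: finite_induct)
  case empty
  show ?case
    by (simp add: generic_arrangement_def independent_empty)
next
  case (insert k K)
  then obtain w :: "'k \<Rightarrow> 'a" and b where "generic_arrangement w b G K"
    by blast
  then obtain v c where "generic_arrangement (w(k := v)) (b(k := c)) G (insert k K)"
    using generic_arrangement_insert[OF insert.hyps] insert.prems by blast
  then show ?case
    by blast
qed

definition lif_thresholds :: "real \<Rightarrow> real \<Rightarrow> real \<Rightarrow> nat \<Rightarrow> real set" where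
  "lif_thresholds u0k \<beta> \<theta> T =
     {lif_g u0k \<beta> \<theta> t a | t a. t \<in> {1..T} \<and> a \<in> {1..t-1} \<rightarrow> {0, 1}}"

lemma lif_family_eq:
  "lif_family W b u0 \<beta> \<theta> T k =
     (\<lambda>g. {x. W $ k \<bullet> x + b $ k = g}) ` lif_thresholds (u0 $ k) \<beta> \<theta> T"
  unfolding lif_family_def lif_thresholds_def by (auto simp: algebra_simps)

lemma lif_g_restrict: "lif_g u \<beta> \<theta> t a = lif_g u \<beta> \<theta> t (restrict a {1..t-1})"
  unfolding lif_g_def by (intro arg_cong2[where f = "(/)"] arg_cong2[where f = "(+)"]
      arg_cong2[where f = "(*)"] sum.cong refl) auto

lemma finite_lif_thresholds: "finite (lif_thresholds u0k \<beta> \<theta> T)"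
proof -
  let ?patterns = "SIGMA t:{1..T}. PiE {1..t-1} (\<lambda>_. {0, 1::real})"
  have "lif_thresholds u0k \<beta> \<theta> T \<subseteq> (\<lambda>(t, a). lif_g u0k \<beta> \<theta> t a) ` ?patterns"
  proof
    fix g assume "g \<in> lif_thresholds u0k \<beta> \<theta> T"
    then obtain t a where g: "g = lif_g u0k \<beta> \<theta> t a"
      and t: "t \<in> {1..T}" and a: "a \<in> {1..t-1} \<rightarrow> {0, 1}"
      unfolding lif_thresholds_def by blast
    have "g = lif_g u0k \<beta> \<theta> t (restrict a {1..t-1})"
      unfolding g by (rule lif_g_restrict)
    moreover have "(t, restrict a {1..t-1}) \<in> ?patterns"
      using t a by auto
    ultimately show "g \<in> (\<lambda>(t, a). lif_g u0k \<beta> \<theta> t a) ` ?patterns"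
      by (intro image_eqI[where x = "(t, restrict a {1..t-1})"]) simp_all
  qed
  moreover have "finite ?patterns"
    by (intro finite_SigmaI finite_PiE) auto
  ultimately show ?thesis
    by (meson finite_imageI finite_subset)
qed

theorem lemmaB17:
  fixes T :: nat and u0 :: "real ^ 'm::finite" and \<beta> \<theta> :: real
  assumes "0 \<le> \<beta>" and "\<beta> \<le> 1" and "\<theta> > 0"
  shows "\<exists>(W :: real ^ 'n::finite ^ 'm) (b :: real ^ 'm).
           families_gen_pos (lif_family W b u0 \<beta> \<theta> T) UNIV"
proof -
  let ?G = "\<lambda>k. lif_thresholds (u0 $ k) \<beta> \<theta> T"
  obtain w :: "'m \<Rightarrow> real ^ 'n" and b where "generic_arrangement w b ?G UNIV"
    using generic_arrangement_exists[of UNIV ?G] finite_lif_thresholds finite_class.finite_UNIV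
    by blast
  then have "families_gen_pos (\<lambda>k. (\<lambda>g. {x. w k \<bullet> x + b k = g}) ` ?G k) UNIV"
    by (simp add: generic_arrangement_families_gen_pos)
  moreover have "lif_family (\<chi> k. w k) (\<chi> k. b k) u0 \<beta> \<theta> T =
      (\<lambda>k. (\<lambda>g. {x. w k \<bullet> x + b k = g}) ` ?G k)"
    by (simp add: lif_family_eq fun_eq_iff)
  ultimately have "families_gen_pos (lif_family (\<chi> k. w k) (\<chi> k. b k) u0 \<beta> \<theta> T) UNIV"
    by simp
  then show ?thesis
    by blast
qed

end
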